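(* Let $(A,B)$ be in canonical form with index set $\mathcal I=\{k_1,\dots,k_m\}$ and controllability index $p$, and let the costs $f_t,g_t$ satisfy the standing assumptions. Define $C:\mathbb R^{mN}\to\mathbb R$ as in the context. Then: (i) $C$ is $\mu_f$-strongly convex and $l_c$-smooth with $l_c=p\,l_f+(p+1)\,l_g\,\|[I_m,\,-A(\mathcal I,:)]\|^2$. (ii) For every $(\mathbf x,\mathbf u)$ with $x_0=0$ and $x_{t+1}=Ax_t+Bu_t$ for $0\le t\le N-1$, setting $z_t=x_t^{\mathcal I}$ ($1\le t\le N$) gives $x_t(\mathbf z)=x_t$, $u_t(\mathbf z)=u_t$ and $C(\mathbf z)=J(\mathbf x,\mathbf u)$. Conversely, for every $\mathbf z\in\mathbb R^{mN}$, the pair $(\mathbf x(\mathbf z),\mathbf u(\mathbf z))$ satisfies $x_{t+1}(\mathbf z)=Ax_t(\mathbf z)+Bu_t(\mathbf z)$, $x_0(\mathbf z)=0$, and $J(\mathbf x(\mathbf z),\mathbf u(\mathbf z))=C(\mathbf z)$. (iii) For each $t$, the stage term $f_t(x_t(\mathbf z))+g_t(u_t(\mathbf z))$ depends only on $z_{t-p+1},\dots,z_{t+1}$.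
   Context: Canonical form: $A\in\mathbb R^{n\times n}$, $B\in\mathbb R^{n\times m}$ are in canonical form if there are indices $0=k_0<k_1<\dots<k_m=n$ such that, with $\mathcal I=\{k_1,\dots,k_m\}$ and $e_i$ the standard basis of $\mathbb R^n$: for every $i\notin\mathcal I$ the $i$-th row of $A$ equals $e_{i+1}^\top$; the rows of $A$ indexed by $\mathcal I$ are arbitrary; the $j$-th column of $B$ is $e_{k_j}$. Put $p_i=k_i-k_{i-1}$ and $p=\max_i p_i$ (the controllability index). $A(\mathcal I,:)\in\mathbb R^{m\times n}$ is the matrix formed by rows $k_1,\dots,k_m$ of $A$; for $x\in\mathbb R^n$, $x^{\mathcal I}=(x^{k_1},\dots,x^{k_m})^\top$; $x^i$ is the $i$-th entry. Problem: dynamics $x_{t+1}=Ax_t+Bu_t$ ($0\le t\le N-1$), $x_0=0$; cost $J(\mathbf x,\mathbf u)=\sum_{t=0}^{N-1}[f_t(x_t)+g_t(u_t)]+f_N(x_N)$, $\mathbf x=(x_1,\dots,x_N)$, $\mathbf u=(u_0,\dots,u_{N-1})$. Standing assumptions: each $f_t:\mathbb R^n\to\mathbb R$ ($0\le t\le N$) is $\mu_f$-strongly convex and $l_f$-smooth (gradient $l_f$-Lipschitz); each $g_t:\mathbb R^m\to\mathbb R$ ($0\le t\le N-1$) is convex and $l_g$-smooth; $\mu_f,l_f,l_g>0$; the minimizers $\theta_t=\arg\min f_t$, $\xi_t=\arg\min g_t$ satisfy $\|\theta_t\|\le\bar\theta$, $\|\xi_t\|\le\bar\xi$. Reparametrization: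 for $\mathbf z=(z_1,\dots,z_N)\in\mathbb R^{mN}$ ($z_t\in\mathbb R^m$, with convention $z_t=0$ for $t\le 0$), set $x_t(\mathbf z)=(z^1_{t-p_1+1},\dots,z^1_t,\ z^2_{t-p_2+1},\dots,z^2_t,\ \dots,\ z^m_{t-p_m+1},\dots,z^m_t)^\top$ for $0\le t\le N$, $u_t(\mathbf z)=z_{t+1}-A(\mathcal I,:)x_t(\mathbf z)$ for $0\le t\le N-1$, and $C(\mathbf z)=\sum_{t=0}^{N}f_t(x_t(\mathbf z))+\sum_{t=0}^{N-1}g_t(u_t(\mathbf z))$. *)

theory Defs
  imports "HOL-Analysis.Analysis"
begin

text \<open>Coordinates of R^d are indexed by a finite type 'd with a fixed enumeration;
  position i (1-based, 1 <= i <= CARD('d)) corresponds to the element ix i.\<close>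

definition ix :: "nat \<Rightarrow> 'a::enum" where
  "ix i = enum_class.enum ! (i - 1)"

definition pos :: "'a::enum \<Rightarrow> nat" where
  "pos a = (THE i. i \<in> {1..CARD('a)} \<and> ix i = a)"

definition strongly_convex :: "real \<Rightarrow> ('v::real_normed_vector \<Rightarrow> real) \<Rightarrow> bool" where
  "strongly_convex \<mu> f \<longleftrightarrow>
     (\<forall>x y. \<forall>\<theta>::real. 0 \<le> \<theta> \<and> \<theta> \<le> 1 \<longrightarrow>
        f (\<theta> *\<^sub>R x + (1 - \<theta>) *\<^sub>R y)
          \<le> \<theta> * f x + (1 - \<theta>) * f y - \<mu> / 2 * \<theta> * (1 - \<theta>) * (norm (x - y))\<^sup>2)"

definition smooth :: "real \<Rightarrow> ('v::real_inner \<Rightarrow> real) \<Rightarrow> bool" where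
  "smooth l f \<longleftrightarrow>
     (\<exists>G. (\<forall>x. (f has_derivative (\<lambda>h. G x \<bullet> h)) (at x))
        \<and> (\<forall>x y. norm (G x - G y) \<le> l * norm (x - y)))"

definition canonical_form :: "real^('n::enum)^('n::enum) \<Rightarrow> real^('m::enum)^('n::enum) \<Rightarrow> (nat \<Rightarrow> nat) \<Rightarrow> bool" where
  "canonical_form A B k \<longleftrightarrow>
     k 0 = 0 \<and> (\<forall>i<CARD(('m::enum)). k i < k (Suc i)) \<and> k CARD(('m::enum)) = CARD(('n::enum)) \<and>
     (\<forall>i\<in>{1..CARD(('n::enum))}. i \<notin> k ` {1..CARD(('m::enum))} \<longrightarrow>
        (\<forall>j\<in>{1..CARD(('n::enum))}. A $ ix i $ ix j = (if j = i + 1 then 1 else 0))) \<and>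
     (\<forall>i\<in>{1..CARD(('n::enum))}. \<forall>j\<in>{1..CARD(('m::enum))}. B $ ix i $ ix j = (if i = k j then 1 else 0))"

definition ctrl_index :: "(nat \<Rightarrow> nat) \<Rightarrow> nat \<Rightarrow> nat" where
  "ctrl_index k m = Max ((\<lambda>i. k i - k (i - 1)) ` {1..m})"

definition rowsI :: "real^('n::enum)^('n::enum) \<Rightarrow> (nat \<Rightarrow> nat) \<Rightarrow> real^('n::enum)^('m::enum)" where
  "rowsI A k = (\<chi> j. A $ ix (k (pos j)))"

definition entriesI :: "real^('n::enum) \<Rightarrow> (nat \<Rightarrow> nat) \<Rightarrow> real^('m::enum)" where
  "entriesI x k = (\<chi> j. x $ ix (k (pos j)))"

definition blk :: "(nat \<Rightarrow> nat) \<Rightarrow> nat \<Rightarrow> nat \<Rightarrow> nat" where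
  "blk k m i = (THE j. j \<in> {1..m} \<and> k (j - 1) < i \<and> i \<le> k j)"

definition zt :: "real^('m::enum)^('T::enum) \<Rightarrow> int \<Rightarrow> real^('m::enum)" where
  "zt z s = (if 1 \<le> s \<and> s \<le> int CARD(('T::enum)) then z $ ix (nat s) else 0)"

definition xz :: "(nat \<Rightarrow> nat) \<Rightarrow> real^('m::enum)^('T::enum) \<Rightarrow> nat \<Rightarrow> real^('n::enum)" where
  "xz k z t = (\<chi> a. let i = pos a; j = blk k CARD(('m::enum)) i
                   in zt z (int t - int (k j - i)) $ ix j)"

definition uz :: "real^('n::enum)^('n::enum) \<Rightarrow> (nat \<Rightarrow> nat) \<Rightarrow> real^('m::enum)^('T::enum) \<Rightarrow> nat \<Rightarrow> real^('m::enum)" where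
  "uz A k z t = zt z (int t + 1) - rowsI A k *v xz k z t"

definition Cz :: "(nat \<Rightarrow> real^('n::enum) \<Rightarrow> real) \<Rightarrow> (nat \<Rightarrow> real^('m::enum) \<Rightarrow> real)
      \<Rightarrow> real^('n::enum)^('n::enum) \<Rightarrow> (nat \<Rightarrow> nat) \<Rightarrow> real^('m::enum)^('T::enum) \<Rightarrow> real" where
  "Cz f g A k z = (\<Sum>t=0..CARD(('T::enum)). f t (xz k z t)) + (\<Sum>t<CARD(('T::enum)). g t (uz A k z t))"

definition Jcost :: "nat \<Rightarrow> (nat \<Rightarrow> real^('n::enum) \<Rightarrow> real) \<Rightarrow> (nat \<Rightarrow> real^('m::enum) \<Rightarrow> real)
      \<Rightarrow> (nat \<Rightarrow> real^('n::enum)) \<Rightarrow> (nat \<Rightarrow> real^('m::enum)) \<Rightarrow> real" where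
  "Jcost N f g x u = (\<Sum>t<N. f t (x t) + g t (u t)) + f N (x N)"

end

theory Submission
  imports Defs
begin

text \<open>In canonical form the state is made of m blocks of delayed copies of the scalar
  sequences z^j: entry i of block j of x_t is z^j at time t - (k_j - i), and every row
  of A outside \<I> just shifts the state. Hence z \<mapsto> (x_t(z), u_t(z)) is linear, the dynamics
  hold by construction, and a trajectory is recovered from its \<I>-entries, which also shows
  that the stage cost at time t sees only the window of z the delays reach.
  Every coordinate of z occurs exactly once among the \<I>-entries of the x_t and at most p
  times among all their entries, so |z|^2 \<le> \<Sum>_t |x_t(z)|^2 \<le> p |z|^2; and
  u_t(z) = [I, -A(\<I>,:)] (z_{t+1}, x_t(z)) gives \<Sum>_t |u_t(z)|^2 \<le> (p+1) K^2 |z|^2.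
  Strong convexity and smoothness of C follow by composing the stage costs with these
  linear maps.\<close>

lemma bij_betw_ix: "bij_betw (ix :: nat \<Rightarrow> ('a::enum)) {1..CARD('a)} UNIV"
proof -
  have "bij_betw (\<lambda>i. (enum_class.enum :: 'a list) ! i) {..<CARD('a)} (set enum_class.enum)"
    by (rule bij_betw_nth) (simp_all add: enum_distinct card_UNIV_length_enum)
  moreover have "bij_betw (\<lambda>i. i - 1) {1..CARD('a)} {..<CARD('a)}"
    by (rule bij_betw_byWitness[where f'="\<lambda>i. i + 1"]) auto
  ultimately have "bij_betw ((\<lambda>i. (enum_class.enum :: 'a list) ! i) \<circ> (\<lambda>i. i - 1))
      {1..CARD('a)} (set enum_class.enum)"
    using bij_betw_trans by blast
  then show ?thesis by (simp add: ix_def[abs_def] o_def UNIV_enum)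
qed

lemma ix_eq_iff:
  "i \<in> {1..CARD(('a::enum))} \<Longrightarrow> j \<in> {1..CARD('a)} \<Longrightarrow> (ix i :: 'a) = ix j \<longleftrightarrow> i = j"
  using bij_betw_imp_inj_on[OF bij_betw_ix] by (auto dest: inj_onD)

lemma pos_ix: "i \<in> {1..CARD(('a::enum))} \<Longrightarrow> pos (ix i :: 'a) = i"
  unfolding pos_def by (rule the_equality) (auto simp: ix_eq_iff)

lemma pos_in_range: "pos (a::('a::enum)) \<in> {1..CARD('a)}"
  and ix_pos [simp]: "ix (pos a) = a"
proof -
  obtain i where i: "i \<in> {1..CARD('a)}" "ix i = a"
    using bij_betw_ix[where 'a='a] by (metis bij_betw_iff_bijections UNIV_I)
  moreover have "pos (ix i :: 'a) = i" using i(1) by (rule pos_ix)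
  ultimately show "pos a \<in> {1..CARD('a)}" "ix (pos a) = a" by auto
qed

lemma sum_UNIV_ix: "(\<Sum>a\<in>(UNIV::('a::enum) set). h a) = (\<Sum>i=1..CARD('a). h (ix i))"
  using sum.reindex_bij_betw[OF bij_betw_ix, of h] by simp

lemma vec_eq_ix: "(x::'b^('a::enum)) = y \<longleftrightarrow> (\<forall>i\<in>{1..CARD('a)}. x $ ix i = y $ ix i)"
  by (metis vec_eq_iff ix_pos pos_in_range)

lemma power2_norm_vec_ix:
  "(norm (x::('b::real_inner)^('a::enum)))\<^sup>2 = (\<Sum>i=1..CARD('a). (norm (x $ ix i))\<^sup>2)"
  by (simp add: power2_norm_eq_inner inner_vec_def sum_UNIV_ix)

lemma power2_norm_matrix_ix:
  "(norm (w::real^('m::enum)^('T::enum)))\<^sup>2 = (\<Sum>j=1..CARD('m). \<Sum>s=1..CARD('T). (w $ ix s $ ix j)\<^sup>2)"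
  by (simp add: power2_norm_vec_ix) (rule sum.swap)

lemma zt_nonpos: "s \<le> 0 \<Longrightarrow> zt z s = 0"
  by (simp add: zt_def)

lemma zt_add: "zt (z + w) s = zt z s + zt w s"
  by (simp add: zt_def)

lemma zt_scaleR: "zt (c *\<^sub>R z) s = c *\<^sub>R zt z s"
  by (simp add: zt_def)

lemma sum_power2_zt_shift_le:
  "(\<Sum>t=0..CARD('T). (zt (w::real^('m::enum)^('T::enum)) (int t - int d) $ a)\<^sup>2)
     \<le> (\<Sum>s=1..CARD('T). (w $ ix s $ a)\<^sup>2)"
proof -
  define F where "F s = (zt w s $ a)\<^sup>2" for s
  define S where "S = int ` {1..CARD('T)}"
  have F_outside: "F s = 0" if "s \<notin> S" for s
  proof -
    have "\<not> (1 \<le> s \<and> s \<le> int CARD('T))"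
    proof
      assume "1 \<le> s \<and> s \<le> int CARD('T)"
      then have "nat s \<in> {1..CARD('T)}" "s = int (nat s)" by auto
      then show False using that unfolding S_def by blast
    qed
    then show ?thesis unfolding F_def zt_def by auto
  qed
  have "(\<Sum>t=0..CARD('T). (zt w (int t - int d) $ a)\<^sup>2) = (\<Sum>s\<in>(\<lambda>t. int t - int d) ` {0..CARD('T)}. F s)"
    by (subst sum.reindex) (auto simp: inj_on_def F_def)
  also have "\<dots> \<le> (\<Sum>s\<in>(\<lambda>t. int t - int d) ` {0..CARD('T)} \<union> S. F s)"
    by (rule sum_mono2) (auto simp: S_def F_def)
  also have "\<dots> = (\<Sum>s\<in>S. F s)"
    by (rule sum.mono_neutral_left[symmetric]) (auto simp: S_def F_outside)
  also have "\<dots> = (\<Sum>s=1..CARD('T). (w $ ix s $ a)\<^sup>2)"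
    unfolding S_def by (subst sum.reindex) (auto simp: F_def zt_def intro: sum.cong)
  finally show ?thesis .
qed

lemma sum_power2_le_sum_power2_zt:
  "(\<Sum>s=1..CARD('T). (w $ ix s $ a)\<^sup>2) \<le> (\<Sum>t=0..CARD('T). (zt (w::real^('m::enum)^('T::enum)) (int t) $ a)\<^sup>2)"
proof -
  have "(\<Sum>s=1..CARD('T). (w $ ix s $ a)\<^sup>2) = (\<Sum>t=1..CARD('T). (zt w (int t) $ a)\<^sup>2)"
    by (rule sum.cong) (auto simp: zt_def)
  also have "\<dots> \<le> (\<Sum>t=0..CARD('T). (zt w (int t) $ a)\<^sup>2)"
    by (rule sum_mono2) auto
  finally show ?thesis .
qed

lemma xz_0: "xz k (z::real^('m::enum)^('T::enum)) 0 = 0"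
  by (simp add: vec_eq_iff xz_def Let_def zt_nonpos)

lemma linear_xz: "linear (\<lambda>z::real^('m::enum)^('T::enum). xz k z t :: real^('n::enum))"
  by (rule linearI) (simp_all add: xz_def zt_add zt_scaleR Let_def vec_eq_iff)

lemma linear_uz: "linear (\<lambda>z::real^('m::enum)^('T::enum). uz (A::real^('n::enum)^('n::enum)) k z t)"
proof -
  have "xz k (z + w) t = (xz k z t :: real^('n::enum)) + xz k w t" "xz k (c *\<^sub>R z) t = c *\<^sub>R (xz k z t :: real^('n::enum))"
    for z w :: "real^('m::enum)^('T::enum)" and c
    using linear_add[OF linear_xz] linear_scale[OF linear_xz] by blast+
  then show ?thesis
    by (intro linearI) (simp_all add: uz_def zt_add zt_scaleR matrix_vector_right_distrib
        matrix_vector_mult_scaleR algebra_simps)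
qed

lemma Jcost_eq: "Jcost N f g x u = (\<Sum>t=0..N. f t (x t)) + (\<Sum>t<N. g t (u t))"
  unfolding Jcost_def by (simp add: sum.distrib atLeast0AtMost lessThan_Suc_atMost[symmetric])

lemma strongly_convex_add_convex:
  assumes "strongly_convex \<mu> f" and "convex_on UNIV g"
  shows "strongly_convex \<mu> (\<lambda>x. f x + g x)"
  unfolding strongly_convex_def
proof (intro allI impI)
  fix x y and \<theta> :: real
  assume \<theta>: "0 \<le> \<theta> \<and> \<theta> \<le> 1"
  have "g (\<theta> *\<^sub>R x + (1 - \<theta>) *\<^sub>R y) \<le> \<theta> * g x + (1 - \<theta>) * g y"
    using convex_onD[OF assms(2), of "1 - \<theta>" x y] \<theta> by (simp add: add.commute)
  moreover have "f (\<theta> *\<^sub>R x + (1 - \<theta>) *\<^sub>R y)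
      \<le> \<theta> * f x + (1 - \<theta>) * f y - \<mu> / 2 * \<theta> * (1 - \<theta>) * (norm (x - y))\<^sup>2"
    using assms(1) \<theta> unfolding strongly_convex_def by blast
  ultimately show "f (\<theta> *\<^sub>R x + (1 - \<theta>) *\<^sub>R y) + g (\<theta> *\<^sub>R x + (1 - \<theta>) *\<^sub>R y)
      \<le> \<theta> * (f x + g x) + (1 - \<theta>) * (f y + g y) - \<mu> / 2 * \<theta> * (1 - \<theta>) * (norm (x - y))\<^sup>2"
    by (simp add: algebra_simps)
qed

lemma convex_on_sum_comp_linear:
  assumes "\<And>t. t \<in> I \<Longrightarrow> linear (U t)" and "\<And>t. t \<in> I \<Longrightarrow> convex_on UNIV (g t)"
  shows "convex_on UNIV (\<lambda>z. \<Sum>t\<in>I. g t (U t z))"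
proof (rule convex_onI)
  fix s :: real and x y
  assume s: "0 < s" "s < 1"
  have "(\<Sum>t\<in>I. g t (U t ((1 - s) *\<^sub>R x + s *\<^sub>R y)))
      \<le> (\<Sum>t\<in>I. (1 - s) * g t (U t x) + s * g t (U t y))"
  proof (rule sum_mono)
    fix t assume t: "t \<in> I"
    show "g t (U t ((1 - s) *\<^sub>R x + s *\<^sub>R y)) \<le> (1 - s) * g t (U t x) + s * g t (U t y)"
      using convex_onD[OF assms(2)[OF t], of s "U t x" "U t y"] s
      by (simp add: linear_add[OF assms(1)[OF t]] linear_scale[OF assms(1)[OF t]])
  qed
  then show "(\<Sum>t\<in>I. g t (U t ((1 - s) *\<^sub>R x + s *\<^sub>R y)))
      \<le> (1 - s) * (\<Sum>t\<in>I. g t (U t x)) + s * (\<Sum>t\<in>I. g t (U t y))"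
    by (simp add: sum.distrib sum_distrib_left)
qed simp

lemma strongly_convex_sum_comp_linear:
  fixes X :: "'i \<Rightarrow> 'z::real_normed_vector \<Rightarrow> 'x::real_normed_vector"
  assumes lin: "\<And>t. t \<in> I \<Longrightarrow> linear (X t)"
    and sc: "\<And>t. t \<in> I \<Longrightarrow> strongly_convex \<mu> (f t)" and "\<mu> \<ge> 0"
    and coercive: "\<And>w. (norm w)\<^sup>2 \<le> (\<Sum>t\<in>I. (norm (X t w))\<^sup>2)"
  shows "strongly_convex \<mu> (\<lambda>z. \<Sum>t\<in>I. f t (X t z))"
  unfolding strongly_convex_def
proof (intro allI impI)
  fix x y and \<theta> :: real
  assume \<theta>: "0 \<le> \<theta> \<and> \<theta> \<le> 1"
  define c where "c = \<mu> / 2 * \<theta> * (1 - \<theta>)"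
  have "c \<ge> 0" using \<theta> \<open>\<mu> \<ge> 0\<close> by (simp add: c_def)
  have stage: "f t (X t (\<theta> *\<^sub>R x + (1 - \<theta>) *\<^sub>R y))
      \<le> \<theta> * f t (X t x) + (1 - \<theta>) * f t (X t y) - c * (norm (X t (x - y)))\<^sup>2" if t: "t \<in> I" for t
    using sc[OF t] \<theta> unfolding strongly_convex_def c_def
    by (simp add: linear_add[OF lin[OF t]] linear_scale[OF lin[OF t]] linear_diff[OF lin[OF t]])
  have "(\<Sum>t\<in>I. f t (X t (\<theta> *\<^sub>R x + (1 - \<theta>) *\<^sub>R y)))
      \<le> (\<Sum>t\<in>I. \<theta> * f t (X t x) + (1 - \<theta>) * f t (X t y) - c * (norm (X t (x - y)))\<^sup>2)"
    by (rule sum_mono) (rule stage)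
  also have "\<dots> = \<theta> * (\<Sum>t\<in>I. f t (X t x)) + (1 - \<theta>) * (\<Sum>t\<in>I. f t (X t y))
      - c * (\<Sum>t\<in>I. (norm (X t (x - y)))\<^sup>2)"
    by (simp add: sum.distrib sum_subtractf sum_distrib_left)
  also have "\<dots> \<le> \<theta> * (\<Sum>t\<in>I. f t (X t x)) + (1 - \<theta>) * (\<Sum>t\<in>I. f t (X t y)) - c * (norm (x - y))\<^sup>2"
    using mult_left_mono[OF coercive \<open>c \<ge> 0\<close>] by simp
  finally show "(\<Sum>t\<in>I. f t (X t (\<theta> *\<^sub>R x + (1 - \<theta>) *\<^sub>R y)))
      \<le> \<theta> * (\<Sum>t\<in>I. f t (X t x)) + (1 - \<theta>) * (\<Sum>t\<in>I. f t (X t y)) - \<mu> / 2 * \<theta> * (1 - \<theta>) * (norm (x - y))\<^sup>2"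
    by (simp add: c_def)
qed

lemma smooth_add:
  assumes "smooth a f" and "smooth c g"
  shows "smooth (a + c) (\<lambda>x. f x + g x)"
proof -
  obtain F G where F: "\<And>x. (f has_derivative (\<lambda>h. F x \<bullet> h)) (at x)" "\<And>x y. norm (F x - F y) \<le> a * norm (x - y)"
    and G: "\<And>x. (g has_derivative (\<lambda>h. G x \<bullet> h)) (at x)" "\<And>x y. norm (G x - G y) \<le> c * norm (x - y)"
    using assms unfolding smooth_def by metis
  have "((\<lambda>x. f x + g x) has_derivative (\<lambda>h. (F x + G x) \<bullet> h)) (at x)" for x
    using has_derivative_add[OF F(1) G(1)] by (simp add: inner_add_left)
  moreover have "norm ((F x + G x) - (F y + G y)) \<le> (a + c) * norm (x - y)" for x y
    using norm_diff_triangle_ineq[of "F x" "G x" "F y" "G y"] F(2)[of x y] G(2)[of x y]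
    by (simp add: distrib_right)
  ultimately show ?thesis unfolding smooth_def by (intro exI[of _ "\<lambda>x. F x + G x"]) blast
qed

lemma sum_norm_mult_le:
  fixes X :: "'i \<Rightarrow> 'z::real_normed_vector \<Rightarrow> 'x::real_normed_vector"
  assumes bound: "\<And>w. (\<Sum>t\<in>I. (norm (X t w))\<^sup>2) \<le> P * (norm w)\<^sup>2" and "P \<ge> 0"
  shows "(\<Sum>t\<in>I. norm (X t v) * norm (X t d)) \<le> P * norm v * norm d"
proof -
  have "(\<Sum>t\<in>I. norm (X t v) * norm (X t d))\<^sup>2 \<le> (\<Sum>t\<in>I. (norm (X t v))\<^sup>2) * (\<Sum>t\<in>I. (norm (X t d))\<^sup>2)"
    by (rule Cauchy_Schwarz_ineq_sum)
  also have "\<dots> \<le> (P * (norm v)\<^sup>2) * (P * (norm d)\<^sup>2)"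
    by (rule mult_mono[OF bound bound]) (use \<open>P \<ge> 0\<close> in \<open>auto intro: sum_nonneg\<close>)
  also have "\<dots> = (P * norm v * norm d)\<^sup>2"
    by (simp add: power2_eq_square)
  finally show ?thesis
    by (rule power2_le_imp_le) (use \<open>P \<ge> 0\<close> in simp)
qed

lemma smooth_sum_comp_linear:
  fixes X :: "'i \<Rightarrow> 'z::euclidean_space \<Rightarrow> 'x::euclidean_space"
  assumes lin: "\<And>t. t \<in> I \<Longrightarrow> linear (X t)" and sm: "\<And>t. t \<in> I \<Longrightarrow> smooth a (f t)"
    and "a \<ge> 0" and "P \<ge> 0" and bound: "\<And>w. (\<Sum>t\<in>I. (norm (X t w))\<^sup>2) \<le> P * (norm w)\<^sup>2"
  shows "smooth (a * P) (\<lambda>z. \<Sum>t\<in>I. f t (X t z))"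
proof -
  obtain F where F: "\<And>t x. t \<in> I \<Longrightarrow> (f t has_derivative (\<lambda>h. F t x \<bullet> h)) (at x)"
    and F_lip: "\<And>t x y. t \<in> I \<Longrightarrow> norm (F t x - F t y) \<le> a * norm (x - y)"
    using sm unfolding smooth_def by metis
  define G where "G z = (\<Sum>t\<in>I. adjoint (X t) (F t (X t z)))" for z
  have G_inner: "G z \<bullet> h = (\<Sum>t\<in>I. F t (X t z) \<bullet> X t h)" for z h
    unfolding G_def inner_sum_left by (intro sum.cong) (auto simp: adjoint_works lin inner_commute)
  have "((\<lambda>z. f t (X t z)) has_derivative (\<lambda>h. F t (X t z) \<bullet> X t h)) (at z)" if "t \<in> I" for t z
    using diff_chain_at[OF linear_imp_has_derivative[OF lin] F, OF that that] by (simp add: o_def)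
  then have deriv: "((\<lambda>z. \<Sum>t\<in>I. f t (X t z)) has_derivative (\<lambda>h. G z \<bullet> h)) (at z)" for z
    unfolding G_inner by (rule has_derivative_sum)
  have lip: "norm (G z - G z') \<le> a * P * norm (z - z')" for z z'
  proof -
    define v d where "v = G z - G z'" and "d = z - z'"
    have "(norm v)\<^sup>2 = (\<Sum>t\<in>I. (F t (X t z) - F t (X t z')) \<bullet> X t v)"
      by (simp add: v_def power2_norm_eq_inner inner_diff_left inner_commute[of v] G_inner sum_subtractf)
    also have "\<dots> \<le> (\<Sum>t\<in>I. a * norm (X t d) * norm (X t v))"
    proof (rule sum_mono)
      fix t assume t: "t \<in> I"
      have "(F t (X t z) - F t (X t z')) \<bullet> X t v \<le> norm (F t (X t z) - F t (X t z')) * norm (X t v)"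
        by (rule norm_cauchy_schwarz)
      also have "\<dots> \<le> a * norm (X t d) * norm (X t v)"
        using F_lip[OF t, of "X t z" "X t z'"] by (simp add: d_def linear_diff[OF lin[OF t]] mult_right_mono)
      finally show "(F t (X t z) - F t (X t z')) \<bullet> X t v \<le> a * norm (X t d) * norm (X t v)" .
    qed
    also have "\<dots> \<le> a * (P * norm d * norm v)"
      using mult_left_mono[OF sum_norm_mult_le[OF bound \<open>P \<ge> 0\<close>, of d v] \<open>a \<ge> 0\<close>]
      by (simp add: sum_distrib_left mult.assoc mult.left_commute)
    finally have "norm v * norm v \<le> (a * P * norm d) * norm v"
      by (simp add: power2_eq_square algebra_simps)
    then show ?thesis
      using \<open>a \<ge> 0\<close> \<open>P \<ge> 0\<close> by (cases "norm v = 0") (auto simp: v_def d_def mult_le_cancel_right)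
  qed
  show ?thesis unfolding smooth_def using deriv lip by blast
qed

locale canonical_pair =
  fixes A :: "real^('n::enum)^('n::enum)" and B :: "real^('m::enum)^('n::enum)" and k :: "nat \<Rightarrow> nat"
  assumes canonical: "canonical_form A B k"
begin

lemma k_0: "k 0 = 0"
  and k_less_Suc: "i < CARD('m) \<Longrightarrow> k i < k (Suc i)"
  and k_CARD: "k CARD('m) = CARD('n)"
  and A_shift_row: "i \<in> {1..CARD('n)} \<Longrightarrow> i \<notin> k ` {1..CARD('m)} \<Longrightarrow> j \<in> {1..CARD('n)} \<Longrightarrow>
     A $ ix i $ ix j = (if j = i + 1 then 1 else 0)"
  and B_entry: "i \<in> {1..CARD('n)} \<Longrightarrow> j \<in> {1..CARD('m)} \<Longrightarrow> B $ ix i $ ix j = (if i = k j then 1 else 0)"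
  using canonical by (simp_all add: canonical_form_def)

lemma k_strict_mono: "a < b \<Longrightarrow> b \<le> CARD('m) \<Longrightarrow> k a < k b"
proof (induction b)
  case (Suc b)
  then show ?case using k_less_Suc[of b] by (cases "a = b") auto
qed simp

lemma k_mono: "a \<le> b \<Longrightarrow> b \<le> CARD('m) \<Longrightarrow> k a \<le> k b"
  using k_strict_mono by (metis le_less)

lemma inj_on_k: "inj_on k {..CARD('m)}"
  by (rule inj_onI) (metis atMost_iff k_strict_mono less_irrefl nat_neq_iff)

lemma k_in_range: "j \<in> {1..CARD('m)} \<Longrightarrow> k j \<in> {1..CARD('n)}"
  using k_strict_mono[of 0 j] k_0 k_mono[of j "CARD('m)"] k_CARD by auto

lemma blk_unique:
  assumes "j \<in> {1..CARD('m)}" "k (j - 1) < i" "i \<le> k j"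
    and "j' \<in> {1..CARD('m)}" "k (j' - 1) < i" "i \<le> k j'"
  shows "j = j'"
proof (rule ccontr)
  assume "j \<noteq> j'"
  then consider "j < j'" | "j' < j" by linarith
  then show False
  proof cases
    case 1
    then have "k j \<le> k (j' - 1)" using assms by (intro k_mono) auto
    then show False using assms by linarith
  next
    case 2
    then have "k j' \<le> k (j - 1)" using assms by (intro k_mono) auto
    then show False using assms by linarith
  qed
qed

lemma blk_spec:
  assumes i: "i \<in> {1..CARD('n)}"
  shows "blk k CARD('m) i \<in> {1..CARD('m)} \<and> k (blk k CARD('m) i - 1) < i \<and> i \<le> k (blk k CARD('m) i)"
proof -
  define j where "j = (LEAST j. i \<le> k j)"
  have ex: "i \<le> k CARD('m)" using i k_CARD by simp
  have "i \<le> k j" unfolding j_def by (rule LeastI[of _ "CARD('m)"]) (rule ex)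
  moreover have "j \<le> CARD('m)" unfolding j_def by (rule Least_le) (rule ex)
  moreover have "j \<noteq> 0" using \<open>i \<le> k j\<close> k_0 i by (cases "j = 0") auto
  moreover have "\<not> i \<le> k (j - 1)"
    unfolding j_def by (rule not_less_Least) (use \<open>j \<noteq> 0\<close> in \<open>simp add: j_def\<close>)
  ultimately have j: "j \<in> {1..CARD('m)} \<and> k (j - 1) < i \<and> i \<le> k j" by auto
  have "blk k CARD('m) i = j" unfolding blk_def
    by (rule the_equality) (use j blk_unique in blast)+
  then show ?thesis using j by simp
qed

lemma blk_eq:
  assumes "j \<in> {1..CARD('m)}" "k (j - 1) < i" "i \<le> k j"
  shows "blk k CARD('m) i = j"
proof -
  have "i \<in> {1..CARD('n)}" using assms k_in_range[OF assms(1)] by auto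
  then show ?thesis using blk_spec assms blk_unique by blast
qed

lemma blk_k: "j \<in> {1..CARD('m)} \<Longrightarrow> blk k CARD('m) (k j) = j"
  by (rule blk_eq) (auto intro: k_strict_mono)

lemma block_length_le_ctrl_index: "j \<in> {1..CARD('m)} \<Longrightarrow> k j - k (j - 1) \<le> ctrl_index k CARD('m)"
  unfolding ctrl_index_def by (rule Max_ge) auto

lemma xz_nth:
  assumes "i \<in> {1..CARD('n)}"
  shows "xz k (z::real^('m::enum)^('T::enum)) t $ (ix i :: ('n::enum))
    = zt z (int t - int (k (blk k CARD('m) i) - i)) $ ix (blk k CARD('m) i)"
  by (simp add: xz_def Let_def pos_ix[OF assms])

lemma xz_nth_k:
  assumes "j \<in> {1..CARD('m)}"
  shows "xz k (z::real^('m::enum)^('T::enum)) t $ (ix (k j) :: ('n::enum)) = zt z (int t) $ ix j"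
  using xz_nth[OF k_in_range[OF assms]] blk_k[OF assms] by simp

lemma xz_Suc_nth_shift:
  assumes i: "i \<in> {1..CARD('n)}" and nI: "i \<notin> k ` {1..CARD('m)}"
  shows "xz k (z::real^('m::enum)^('T::enum)) (t + 1) $ (ix i :: ('n::enum)) = xz k z t $ (ix (i + 1) :: 'n)"
proof -
  define j where "j = blk k CARD('m) i"
  have "j \<in> {1..CARD('m)}" "k (j - 1) < i" "i \<le> k j"
    using blk_spec[OF i] unfolding j_def by auto
  moreover have "i \<noteq> k j" using nI \<open>j \<in> {1..CARD('m)}\<close> by blast
  ultimately have j: "j \<in> {1..CARD('m)}" "k (j - 1) < i" "i < k j" by auto
  then have i1: "i + 1 \<in> {1..CARD('n)}" using k_in_range[OF j(1)] by auto
  have "blk k CARD('m) (i + 1) = j" using j by (intro blk_eq) auto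
  have "xz k z (t + 1) $ (ix i :: ('n::enum)) = zt z (int (t + 1) - int (k j - i)) $ ix j"
    unfolding j_def by (rule xz_nth[OF i])
  also have "int (t + 1) - int (k j - i) = int t - int (k j - (i + 1))" using j by simp
  also have "zt z (int t - int (k j - (i + 1))) $ ix j = xz k z t $ (ix (i + 1) :: ('n::enum))"
    by (simp only: xz_nth[OF i1] \<open>blk k CARD('m) (i + 1) = j\<close>)
  finally show ?thesis by simp
qed

lemma rowsI_mult_nth: "j \<in> {1..CARD('m)} \<Longrightarrow> (rowsI A k *v x) $ (ix j :: ('m::enum)) = (A *v x) $ ix (k j)"
  by (simp add: rowsI_def matrix_vector_mult_def pos_ix)

lemma entriesI_nth: "j \<in> {1..CARD('m)} \<Longrightarrow> (entriesI x k :: real^('m::enum)) $ ix j = x $ ix (k j)"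
  by (simp add: entriesI_def pos_ix)

lemma dynamics_nth_shift:
  assumes i: "i \<in> {1..CARD('n)}" and nI: "i \<notin> k ` {1..CARD('m)}"
  shows "(A *v x + B *v u) $ ix i = x $ ix (i + 1)"
proof -
  have "CARD('m) \<in> {1..CARD('m)}" by (simp add: Suc_leI)
  then have "CARD('n) \<in> k ` {1..CARD('m)}" using k_CARD by (metis image_eqI)
  then have "i + 1 \<in> {1..CARD('n)}" using i nI by (cases "i = CARD('n)") auto
  have "(A *v x) $ ix i = (\<Sum>j=1..CARD('n). A $ ix i $ ix j * x $ ix j)"
    by (simp add: matrix_vector_mult_def sum_UNIV_ix)
  also have "\<dots> = (\<Sum>j=1..CARD('n). if j = i + 1 then x $ ix j else 0)"
    by (rule sum.cong) (auto simp: A_shift_row[OF i nI])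
  also have "\<dots> = x $ ix (i + 1)" using \<open>i + 1 \<in> {1..CARD('n)}\<close> by simp
  finally have "(A *v x) $ ix i = x $ ix (i + 1)" .
  moreover have "(B *v u) $ ix i = 0"
    using i nI by (auto simp: matrix_vector_mult_def sum_UNIV_ix B_entry intro!: sum.neutral)
  ultimately show ?thesis by simp
qed

lemma dynamics_nth_k:
  assumes j: "j \<in> {1..CARD('m)}"
  shows "(A *v x + B *v u) $ ix (k j) = (rowsI A k *v x) $ (ix j :: ('m::enum)) + u $ ix j"
proof -
  have "(B *v u) $ ix (k j) = (\<Sum>j'=1..CARD('m). B $ ix (k j) $ ix j' * u $ ix j')"
    by (simp add: matrix_vector_mult_def sum_UNIV_ix)
  also have "\<dots> = (\<Sum>j'=1..CARD('m). if j' = j then u $ ix j' else 0)"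
    by (rule sum.cong) (use j inj_on_k k_in_range in \<open>auto simp: B_entry inj_on_def\<close>)
  finally have "(B *v u) $ ix (k j) = u $ ix j" using j by simp
  then show ?thesis by (simp add: rowsI_mult_nth[OF j])
qed

lemma xz_dynamics:
  "xz k (z::real^('m::enum)^('T::enum)) (t + 1) = A *v xz k z t + B *v uz A k z t"
  unfolding vec_eq_ix
proof
  fix i assume i: "i \<in> {1..CARD('n)}"
  show "(xz k z (t + 1) :: real^('n::enum)) $ ix i = (A *v xz k z t + B *v uz A k z t) $ ix i"
  proof (cases "i \<in> k ` {1..CARD('m)}")
    case True
    then obtain j where j: "j \<in> {1..CARD('m)}" and "i = k j" by blast
    have "xz k z (t + 1) $ (ix (k j) :: ('n::enum)) = zt z (int t + 1) $ ix j"
      using xz_nth_k[OF j, of z "t + 1"] by (simp add: add.commute)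
    also have "\<dots> = (A *v xz k z t + B *v uz A k z t) $ ix (k j)"
      unfolding dynamics_nth_k[OF j] uz_def by simp
    finally show ?thesis using \<open>i = k j\<close> by simp
  next
    case False
    have "(xz k z (t + 1) :: real^('n::enum)) $ ix i = (xz k z t :: real^('n::enum)) $ ix (i + 1)"
      by (rule xz_Suc_nth_shift[OF i False])
    also have "\<dots> = (A *v xz k z t + B *v uz A k z t) $ ix i"
      by (rule dynamics_nth_shift[OF i False, symmetric])
    finally show ?thesis .
  qed
qed

context
  fixes x :: "nat \<Rightarrow> real^('n::enum)" and u :: "nat \<Rightarrow> real^('m::enum)" and z :: "real^('m::enum)^('T::enum)"
  assumes x_0: "x 0 = 0"
    and dynamics: "\<forall>t<CARD('T). x (t + 1) = A *v x t + B *v u t"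
    and z_def: "z = (\<chi> s. entriesI (x (pos s)) k)"
begin

lemma zt_trajectory_nth: "t \<in> {1..CARD('T)} \<Longrightarrow> j \<in> {1..CARD('m)} \<Longrightarrow> zt z (int t) $ ix j = x t $ ix (k j)"
  by (simp add: zt_def z_def pos_ix entriesI_nth)

lemma xz_trajectory: "t \<le> CARD('T) \<Longrightarrow> xz k z t = x t"
proof (induction t)
  case 0
  show ?case by (simp add: x_0 xz_0)
next
  case (Suc t)
  show ?case unfolding vec_eq_ix
  proof
    fix i assume i: "i \<in> {1..CARD('n)}"
    show "(xz k z (Suc t) :: real^('n::enum)) $ ix i = x (Suc t) $ ix i"
    proof (cases "i \<in> k ` {1..CARD('m)}")
      case True
      then obtain j where j: "j \<in> {1..CARD('m)}" and "i = k j" by blast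
      have "xz k z (Suc t) $ (ix (k j) :: ('n::enum)) = x (Suc t) $ ix (k j)"
        using xz_nth_k[OF j, of z "Suc t"] zt_trajectory_nth[OF _ j, of "Suc t"] Suc.prems by simp
      then show ?thesis using \<open>i = k j\<close> by simp
    next
      case False
      have "x (Suc t) = A *v x t + B *v u t" using dynamics Suc.prems by simp
      then have "x (Suc t) $ ix i = x t $ ix (i + 1)" by (simp only: dynamics_nth_shift[OF i False])
      then show ?thesis using xz_Suc_nth_shift[OF i False, of z t] Suc by simp
    qed
  qed
qed

lemma uz_trajectory: "t < CARD('T) \<Longrightarrow> uz A k z t = u t"
  unfolding vec_eq_ix
proof
  fix j assume t: "t < CARD('T)" and j: "j \<in> {1..CARD('m)}"
  have "zt z (int t + 1) $ ix j = (A *v x t + B *v u t) $ ix (k j)"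
    using zt_trajectory_nth[of "t + 1" j] t j dynamics by (simp add: add.commute)
  also have "\<dots> = (rowsI A k *v x t) $ (ix j :: ('m::enum)) + u t $ ix j"
    by (rule dynamics_nth_k[OF j])
  finally show "uz A k z t $ ix j = u t $ ix j"
    using t by (simp add: uz_def xz_trajectory)
qed

end

text \<open>Entry i of x_t(z) in block j is z^j_{t-(k_j-i)} with 0 \<le> k_j - i < p, and u_t(z) adds z_{t+1}.\<close>

lemma xz_uz_local:
  fixes z z' :: "real^('m::enum)^('T::enum)"
  assumes agree: "\<forall>s\<in>{1..CARD('T)}. int t - int (ctrl_index k CARD('m)) + 1 \<le> int s \<and> s \<le> t + 1 \<longrightarrow> z $ ix s = z' $ ix s"
  shows "xz k z t = (xz k z' t :: real^('n::enum))" and "uz A k z t = uz A k z' t"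
proof -
  let ?p = "ctrl_index k CARD('m)"
  have zt_eq: "zt z s = zt z' s" if "int t - int ?p + 1 \<le> s" "s \<le> int t + 1" for s
  proof (cases "1 \<le> s \<and> s \<le> int CARD('T)")
    case True
    then have "nat s \<in> {1..CARD('T)}" "int t - int ?p + 1 \<le> int (nat s)" "nat s \<le> t + 1"
      using that by auto
    then show ?thesis using agree True by (simp add: zt_def)
  qed (auto simp: zt_def)
  show xz_eq: "xz k z t = (xz k z' t :: real^('n::enum))"
    unfolding vec_eq_ix
  proof
    fix i assume i: "i \<in> {1..CARD('n)}"
    define j where "j = blk k CARD('m) i"
    have "j \<in> {1..CARD('m)}" "k (j - 1) < i" "i \<le> k j" using blk_spec[OF i] j_def by auto
    then have "k j - i < ?p" using block_length_le_ctrl_index by fastforce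
    then show "(xz k z t :: real^('n::enum)) $ ix i = (xz k z' t :: real^('n::enum)) $ ix i"
      using zt_eq by (simp add: xz_nth[OF i] j_def[symmetric])
  qed
  have "1 \<le> ?p" using block_length_le_ctrl_index[of 1] k_strict_mono[of 0 1] k_0 finite_UNIV_card_ge_0[where 'a='m]
    by simp
  then have "zt z (int t + 1) = zt z' (int t + 1)" by (intro zt_eq) auto
  then show "uz A k z t = uz A k z' t" by (simp add: uz_def xz_eq)
qed

lemma power2_norm_xz:
  "(norm (xz k (w::real^('m::enum)^('T::enum)) t :: real^('n::enum)))\<^sup>2
     = (\<Sum>i=1..CARD('n). (zt w (int t - int (k (blk k CARD('m) i) - i)) $ ix (blk k CARD('m) i))\<^sup>2)"
  unfolding power2_norm_vec_ix by (intro sum.cong) (auto simp: xz_nth)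

text \<open>Each block has at most p rows.\<close>

lemma sum_blk_le:
  assumes "\<And>j. h j \<ge> (0::real)"
  shows "(\<Sum>i=1..CARD('n). h (blk k CARD('m) i)) \<le> real (ctrl_index k CARD('m)) * (\<Sum>j=1..CARD('m). h j)"
proof -
  let ?b = "blk k CARD('m)" and ?p = "ctrl_index k CARD('m)"
  have "(\<Sum>i=1..CARD('n). h (?b i)) = (\<Sum>j=1..CARD('m). \<Sum>i\<in>{i \<in> {1..CARD('n)}. ?b i = j}. h (?b i))"
    by (rule sum.group[symmetric]) (use blk_spec in \<open>auto simp: image_subset_iff\<close>)
  also have "\<dots> = (\<Sum>j=1..CARD('m). real (card {i \<in> {1..CARD('n)}. ?b i = j}) * h j)"
    by (rule sum.cong) auto
  also have "\<dots> \<le> (\<Sum>j=1..CARD('m). real ?p * h j)"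
  proof (rule sum_mono)
    fix j assume j: "j \<in> {1..CARD('m)}"
    have "card {i \<in> {1..CARD('n)}. ?b i = j} \<le> card {k (j - 1)<..k j}"
      by (rule card_mono) (use blk_spec in auto)
    also have "\<dots> \<le> ?p" using block_length_le_ctrl_index[OF j] by simp
    finally show "real (card {i \<in> {1..CARD('n)}. ?b i = j}) * h j \<le> real ?p * h j"
      by (intro mult_right_mono assms) simp
  qed
  also have "\<dots> = real ?p * (\<Sum>j=1..CARD('m). h j)"
    by (simp add: sum_distrib_left)
  finally show ?thesis .
qed

lemma sum_power2_norm_xz_le:
  "(\<Sum>t=0..CARD('T). (norm (xz k (w::real^('m::enum)^('T::enum)) t :: real^('n::enum)))\<^sup>2)
     \<le> real (ctrl_index k CARD('m)) * (norm w)\<^sup>2"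
proof -
  let ?b = "blk k CARD('m)"
  have "(\<Sum>t=0..CARD('T). (norm (xz k w t :: real^('n::enum)))\<^sup>2)
      = (\<Sum>i=1..CARD('n). \<Sum>t=0..CARD('T). (zt w (int t - int (k (?b i) - i)) $ ix (?b i))\<^sup>2)"
    unfolding power2_norm_xz by (rule sum.swap)
  also have "\<dots> \<le> (\<Sum>i=1..CARD('n). \<Sum>s=1..CARD('T). (w $ ix s $ ix (?b i))\<^sup>2)"
    by (intro sum_mono sum_power2_zt_shift_le)
  also have "\<dots> \<le> real (ctrl_index k CARD('m)) * (\<Sum>j=1..CARD('m). \<Sum>s=1..CARD('T). (w $ ix s $ ix j)\<^sup>2)"
    by (rule sum_blk_le) (simp add: sum_nonneg)
  finally show ?thesis by (simp add: power2_norm_matrix_ix)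
qed

text \<open>The \<I>-entries of x_0(z), ..., x_N(z) are z_0 = 0, z_1, ..., z_N.\<close>

lemma power2_norm_le_sum_power2_norm_xz:
  "(norm w)\<^sup>2 \<le> (\<Sum>t=0..CARD('T). (norm (xz k (w::real^('m::enum)^('T::enum)) t :: real^('n::enum)))\<^sup>2)"
proof -
  define F where "F i = (\<Sum>t=0..CARD('T). ((xz k w t :: real^('n::enum)) $ ix i)\<^sup>2)" for i
  have "(norm w)\<^sup>2 = (\<Sum>j=1..CARD('m). \<Sum>s=1..CARD('T). (w $ ix s $ ix j)\<^sup>2)"
    by (rule power2_norm_matrix_ix)
  also have "\<dots> \<le> (\<Sum>j=1..CARD('m). \<Sum>t=0..CARD('T). (zt w (int t) $ ix j)\<^sup>2)"
    by (intro sum_mono sum_power2_le_sum_power2_zt)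
  also have "\<dots> = (\<Sum>j=1..CARD('m). F (k j))"
    by (rule sum.cong) (auto simp: F_def xz_nth_k)
  also have "\<dots> = (\<Sum>i\<in>k ` {1..CARD('m)}. F i)"
    by (rule sum.reindex[symmetric, unfolded o_def]) (rule inj_on_subset[OF inj_on_k], auto)
  also have "\<dots> \<le> (\<Sum>i=1..CARD('n). F i)"
    by (rule sum_mono2) (use k_in_range in \<open>auto simp: F_def sum_nonneg\<close>)
  also have "\<dots> = (\<Sum>t=0..CARD('T). (norm (xz k w t :: real^('n::enum)))\<^sup>2)"
    unfolding power2_norm_vec_ix F_def by simp (rule sum.swap)
  finally show ?thesis .
qed

lemma sum_power2_norm_uz_le:
  defines "M \<equiv> (\<lambda>vw::(real^('m::enum)) \<times> (real^('n::enum)). fst vw - rowsI A k *v snd vw)"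
  shows "(\<Sum>t<CARD('T). (norm (uz A k (w::real^('m::enum)^('T::enum)) t))\<^sup>2)
     \<le> real (ctrl_index k CARD('m) + 1) * (onorm M)\<^sup>2 * (norm w)\<^sup>2"
proof -
  let ?p = "ctrl_index k CARD('m)" and ?K = "onorm M"
  have "linear M"
    by (rule linearI) (auto simp: M_def algebra_simps matrix_vector_right_distrib matrix_vector_mult_scaleR)
  then have M: "bounded_linear M" by (rule linear_conv_bounded_linear[THEN iffD1])
  have stage: "(norm (uz A k w t))\<^sup>2 \<le> ?K\<^sup>2 * ((norm (zt w (int t + 1)))\<^sup>2 + (norm (xz k w t :: real^('n::enum)))\<^sup>2)" for t
  proof -
    have "norm (uz A k w t) \<le> ?K * norm (zt w (int t + 1), xz k w t :: real^('n::enum))"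
      using onorm[OF M, of "(zt w (int t + 1), xz k w t)"] by (simp add: M_def uz_def)
    then have "(norm (uz A k w t))\<^sup>2 \<le> (?K * norm (zt w (int t + 1), xz k w t :: real^('n::enum)))\<^sup>2"
      by (rule power_mono) simp
    then show ?thesis by (simp add: power_mult_distrib norm_Pair)
  qed
  have z_part: "(\<Sum>t<CARD('T). (norm (zt w (int t + 1)))\<^sup>2) = (norm w)\<^sup>2"
  proof -
    have "(norm w)\<^sup>2 = (\<Sum>t<CARD('T). (norm (w $ ix (Suc t)))\<^sup>2)"
      by (simp add: power2_norm_vec_ix sum.atLeast1_atMost_eq)
    also have "\<dots> = (\<Sum>t<CARD('T). (norm (zt w (int t + 1)))\<^sup>2)"
      by (rule sum.cong) (auto simp: zt_def nat_add_distrib)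
    finally show ?thesis by simp
  qed
  have x_part: "(\<Sum>t<CARD('T). (norm (xz k w t :: real^('n::enum)))\<^sup>2) \<le> real ?p * (norm w)\<^sup>2"
    using sum_mono2[of "{0..CARD('T)}" "{..<CARD('T)}" "\<lambda>t. (norm (xz k w t :: real^('n::enum)))\<^sup>2"]
      sum_power2_norm_xz_le[of w] by fastforce
  have "(\<Sum>t<CARD('T). (norm (uz A k w t))\<^sup>2)
      \<le> (\<Sum>t<CARD('T). ?K\<^sup>2 * ((norm (zt w (int t + 1)))\<^sup>2 + (norm (xz k w t :: real^('n::enum)))\<^sup>2))"
    by (rule sum_mono) (rule stage)
  also have "\<dots> = ?K\<^sup>2 * ((\<Sum>t<CARD('T). (norm (zt w (int t + 1)))\<^sup>2) + (\<Sum>t<CARD('T). (norm (xz k w t :: real^('n::enum)))\<^sup>2))"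
    by (simp add: sum_distrib_left sum.distrib distrib_left)
  also have "\<dots> \<le> ?K\<^sup>2 * ((norm w)\<^sup>2 + real ?p * (norm w)\<^sup>2)"
    using z_part x_part by (intro mult_left_mono) auto
  also have "\<dots> = real (?p + 1) * ?K\<^sup>2 * (norm w)\<^sup>2"
    by (simp add: algebra_simps)
  finally show ?thesis .
qed

end

theorem lemma1:
  fixes A :: "real^('n::enum)^('n::enum)" and B :: "real^('m::enum)^('n::enum)" and k :: "nat \<Rightarrow> nat"
    and f :: "nat \<Rightarrow> real^('n::enum) \<Rightarrow> real" and g :: "nat \<Rightarrow> real^('m::enum) \<Rightarrow> real"
    and \<mu>f lf lg \<theta>bar \<xi>bar :: real
  defines "N \<equiv> CARD(('T::enum))"
  defines "p \<equiv> ctrl_index k CARD(('m::enum))"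
  defines "C \<equiv> (Cz f g A k :: real^('m::enum)^('T::enum) \<Rightarrow> real)"
  assumes canon: "canonical_form A B k"
    and pos: "\<mu>f > 0" "lf > 0" "lg > 0"
    and f_sc: "\<And>t. t \<le> N \<Longrightarrow> strongly_convex \<mu>f (f t)"
    and f_sm: "\<And>t. t \<le> N \<Longrightarrow> smooth lf (f t)"
    and g_cv: "\<And>t. t < N \<Longrightarrow> convex_on UNIV (g t)"
    and g_sm: "\<And>t. t < N \<Longrightarrow> smooth lg (g t)"
    and f_min: "\<And>t. t \<le> N \<Longrightarrow> \<exists>\<theta>. (\<forall>x. f t \<theta> \<le> f t x) \<and> norm \<theta> \<le> \<theta>bar"
    and g_min: "\<And>t. t < N \<Longrightarrow> \<exists>\<xi>. (\<forall>v. g t \<xi> \<le> g t v) \<and> norm \<xi> \<le> \<xi>bar"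
  shows
    "strongly_convex \<mu>f C
     \<and> smooth (real p * lf + real (p + 1) * lg
                 * (onorm (\<lambda>vw::(real^('m::enum)) \<times> (real^('n::enum)). fst vw - rowsI A k *v snd vw))\<^sup>2) C
     \<and> (\<forall>x u. x 0 = 0 \<and> (\<forall>t<N. x (t + 1) = A *v x t + B *v u t) \<longrightarrow>
          (let z = (\<chi> s. entriesI (x (pos s)) k) :: real^('m::enum)^('T::enum) in
             (\<forall>t\<le>N. xz k z t = x t) \<and> (\<forall>t<N. uz A k z t = u t)
             \<and> C z = Jcost N f g x u))
     \<and> (\<forall>z::real^('m::enum)^('T::enum). xz k z 0 = 0
          \<and> (\<forall>t<N. xz k z (t + 1) = A *v xz k z t + B *v uz A k z t)
          \<and> Jcost N f g (xz k z) (uz A k z) = C z)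
     \<and> (\<forall>t<N. \<forall>(z::real^('m::enum)^('T::enum)) z'::real^('m::enum)^('T::enum).
          (\<forall>s\<in>{1..N}. int t - int p + 1 \<le> int s \<and> s \<le> t + 1 \<longrightarrow> z $ ix s = z' $ ix s) \<longrightarrow>
          f t (xz k z t) + g t (uz A k z t) = f t (xz k z' t) + g t (uz A k z' t))"
proof -
  interpret canonical_pair A B k by (rule canonical_pair.intro[OF canon])
  define K where "K = onorm (\<lambda>vw::(real^('m::enum)) \<times> (real^('n::enum)). fst vw - rowsI A k *v snd vw)"
  have C_eq: "C = (\<lambda>z. (\<Sum>t\<in>{0..N}. f t (xz k z t)) + (\<Sum>t\<in>{..<N}. g t (uz A k z t)))"
    by (simp add: C_def N_def Cz_def fun_eq_iff)
  have convex: "strongly_convex \<mu>f C"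
    unfolding C_eq using pos f_sc g_cv power2_norm_le_sum_power2_norm_xz
    by (intro strongly_convex_add_convex strongly_convex_sum_comp_linear convex_on_sum_comp_linear
        linear_xz linear_uz) (auto simp: N_def)
  have "smooth (lf * real p + lg * (real (p + 1) * K\<^sup>2)) C"
    unfolding C_eq using pos f_sm g_sm sum_power2_norm_xz_le sum_power2_norm_uz_le
    by (intro smooth_add smooth_sum_comp_linear linear_xz linear_uz) (auto simp: N_def p_def K_def)
  then have smooth: "smooth (real p * lf + real (p + 1) * lg * K\<^sup>2) C"
    by (simp add: ac_simps)
  have trajectory: "let z = (\<chi> s. entriesI (x (pos s)) k) :: real^('m::enum)^('T::enum) in
      (\<forall>t\<le>N. xz k z t = x t) \<and> (\<forall>t<N. uz A k z t = u t) \<and> C z = Jcost N f g x u"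
    if "x 0 = 0" "\<forall>t<N. x (t + 1) = A *v x t + B *v u t" for x u
    using xz_trajectory[where 'T='T, OF that[unfolded N_def] refl]
      uz_trajectory[where 'T='T, OF that[unfolded N_def] refl]
    by (simp add: Let_def C_eq Jcost_eq N_def)
  have reparametrization: "Jcost N f g (xz k z) (uz A k z) = C z" for z
    by (simp add: C_eq Jcost_eq)
  have stage_local: "f t (xz k z t) + g t (uz A k z t) = f t (xz k z' t) + g t (uz A k z' t)"
    if "\<forall>s\<in>{1..N}. int t - int p + 1 \<le> int s \<and> s \<le> t + 1 \<longrightarrow> z $ ix s = z' $ ix s"
    for t and z z' :: "real^('m::enum)^('T::enum)"
    using xz_uz_local[OF that[unfolded N_def p_def]] by simp
  show ?thesis
    using convex smooth trajectory reparametrization stage_local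
    by (auto simp: K_def xz_0 xz_dynamics[simplified])
qed

end
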